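(* Let $\Gamma$ be a Gromov hyperbolic metric space and let $G$ be a group acting on $\Gamma$ by isometries such that the action is of general type. Let $P$ be a positive cone of $G$. Then the $P$-orbits in $\Gamma$ accumulate on every point of $\Lambda(G)$; that is, for every $x_0\in\Gamma$, every point of $\Lambda(G)$ is an accumulation point in $\partial\Gamma$ of the set $\{p x_0 \mid p\in P\}$ (equivalently $\Lambda(G)\subseteq \Lambda(P)$).
   Context: A positive cone of a group $G$ is a subsemigroup $P\subseteq G$ such that $G$ is the disjoint union $P\sqcup P^{-1}\sqcup\{1\}$, where $P^{-1}=\{g^{-1}:g\in P\}$. For a subset $H\subseteq G$ and $x_0\in\Gamma$, $\Lambda(H)\subseteq\partial\Gamma$ denotes the set of accumulation points in the Gromov boundary $\partial\Gamma$ of the orbit $\{hx_0\mid h\in H\}$; it does not depend on $x_0$. The action is called non-elementary if $|\Lambda(G)|\geq 3$, and it is of general type if it is non-elementary and $G$ does not fix any point of $\Lambda(G)$. *)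

theory Defs
  imports "HOL-Analysis.Analysis" "HOL-Algebra.Group_Action"
begin

definition gromov_product :: "'a::metric_space \<Rightarrow> 'a \<Rightarrow> 'a \<Rightarrow> real" where
  "gromov_product w x y = (dist w x + dist w y - dist x y) / 2"

definition gromov_hyperbolic_space :: "'a::metric_space itself \<Rightarrow> bool" where
  "gromov_hyperbolic_space _ \<longleftrightarrow> (\<exists>\<delta>::real. \<delta> \<ge> 0 \<and>
     (\<forall>(w::'a) x y z. gromov_product w x z \<ge> min (gromov_product w x y) (gromov_product w y z) - \<delta>))"

definition conv_at_infinity :: "(nat \<Rightarrow> 'a::metric_space) \<Rightarrow> bool" where
  "conv_at_infinity s \<longleftrightarrow> (\<forall>w (M::real). \<exists>N. \<forall>n\<ge>N. \<forall>m\<ge>N. gromov_product w (s n) (s m) \<ge> M)"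

definition equiv_at_infinity :: "(nat \<Rightarrow> 'a::metric_space) \<Rightarrow> (nat \<Rightarrow> 'a) \<Rightarrow> bool" where
  "equiv_at_infinity s t \<longleftrightarrow> (\<forall>w (M::real). \<exists>N. \<forall>n\<ge>N. \<forall>m\<ge>N. gromov_product w (s n) (t m) \<ge> M)"

text \<open>A boundary point is the equivalence class of a sequence converging at infinity.\<close>
definition gromov_boundary :: "(nat \<Rightarrow> 'a::metric_space) set set" where
  "gromov_boundary = {{t. conv_at_infinity t \<and> equiv_at_infinity s t} | s. conv_at_infinity s}"

definition limit_set :: "('g \<Rightarrow> 'a::metric_space \<Rightarrow> 'a) \<Rightarrow> 'g set \<Rightarrow> 'a \<Rightarrow> (nat \<Rightarrow> 'a) set set" where
  "limit_set act H x0 = {\<xi> \<in> gromov_boundary. \<exists>s\<in>\<xi>. \<forall>n. s n \<in> (\<lambda>h. act h x0) ` H}"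

definition boundary_act :: "('g \<Rightarrow> 'a::metric_space \<Rightarrow> 'a) \<Rightarrow> 'g \<Rightarrow> (nat \<Rightarrow> 'a) set \<Rightarrow> (nat \<Rightarrow> 'a) set" where
  "boundary_act act g \<xi> = (\<lambda>s. act g \<circ> s) ` \<xi>"

definition isometric_action :: "('g, 'b) monoid_scheme \<Rightarrow> ('g \<Rightarrow> 'a::metric_space \<Rightarrow> 'a) \<Rightarrow> bool" where
  "isometric_action G act \<longleftrightarrow> group_action G UNIV act \<and>
     (\<forall>g\<in>carrier G. \<forall>x y. dist (act g x) (act g y) = dist x y)"

definition non_elementary :: "('g, 'b) monoid_scheme \<Rightarrow> ('g \<Rightarrow> 'a::metric_space \<Rightarrow> 'a) \<Rightarrow> bool" where
  "non_elementary G act \<longleftrightarrow> (\<forall>x0. \<exists>a b c. a \<in> limit_set act (carrier G) x0 \<and>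
     b \<in> limit_set act (carrier G) x0 \<and> c \<in> limit_set act (carrier G) x0 \<and>
     a \<noteq> b \<and> a \<noteq> c \<and> b \<noteq> c)"

definition general_type :: "('g, 'b) monoid_scheme \<Rightarrow> ('g \<Rightarrow> 'a::metric_space \<Rightarrow> 'a) \<Rightarrow> bool" where
  "general_type G act \<longleftrightarrow> non_elementary G act \<and>
     (\<forall>x0. \<not> (\<exists>\<xi>\<in>limit_set act (carrier G) x0. \<forall>g\<in>carrier G. boundary_act act g \<xi> = \<xi>))"

definition positive_cone :: "('g, 'b) monoid_scheme \<Rightarrow> 'g set \<Rightarrow> bool" where
  "positive_cone G P \<longleftrightarrow> P \<subseteq> carrier G \<and>
     (\<forall>a\<in>P. \<forall>b\<in>P. a \<otimes>\<^bsub>G\<^esub> b \<in> P) \<and>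
     carrier G = P \<union> (\<lambda>g. inv\<^bsub>G\<^esub> g) ` P \<union> {\<one>\<^bsub>G\<^esub>} \<and>
     P \<inter> (\<lambda>g. inv\<^bsub>G\<^esub> g) ` P = {} \<and> \<one>\<^bsub>G\<^esub> \<notin> P \<and>
     \<one>\<^bsub>G\<^esub> \<notin> (\<lambda>g. inv\<^bsub>G\<^esub> g) ` P"

end

theory Submission
  imports Defs
begin

text \<open>
  Let \<open>g\<^sub>n x\<^sub>0 \<rightarrow> \<xi>\<close> and put \<open>z\<^sub>n = g\<^sub>n\<inverse> x\<^sub>0\<close>. Because the action is of general type,
  some \<open>h \<in> G\<close> moves \<open>(z\<^sub>n)\<close> off its own boundary class: either \<open>(z\<^sub>n)\<close> does not converge
  at infinity and \<open>h = 1\<close> works, or it converges to a point of \<open>\<Lambda>(G)\<close>, which some \<open>h\<close> does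
  not fix. Hence \<open>(z\<^sub>n | h z\<^sub>m)\<^sub>x\<^sub>0\<close> stays bounded along arbitrarily late pairs \<open>n, m\<close>.
  For such a pair, translating by \<open>g\<^sub>n\<close> resp. by \<open>g\<^sub>m h\<inverse>\<close> shows that \<open>a = g\<^sub>n h g\<^sub>m\<inverse>\<close>
  satisfies \<open>(a x\<^sub>0 | g\<^sub>n x\<^sub>0)\<^sub>x\<^sub>0 \<approx> d(x\<^sub>0, g\<^sub>n x\<^sub>0)\<close> and
  \<open>(a\<inverse> x\<^sub>0 | g\<^sub>m h\<inverse> x\<^sub>0)\<^sub>x\<^sub>0 \<approx> d(x\<^sub>0, g\<^sub>m x\<^sub>0)\<close>, so both \<open>a x\<^sub>0\<close> and \<open>a\<inverse> x\<^sub>0\<close> are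
  close to \<open>\<xi>\<close>. Since \<open>a \<noteq> 1\<close>, one of \<open>a, a\<inverse>\<close> lies in \<open>P\<close>; letting \<open>n, m \<rightarrow> \<infinity>\<close>
  yields points of \<open>P x\<^sub>0\<close> converging to \<open>\<xi>\<close>.
\<close>

lemma gromov_product_commute: "gromov_product w x y = gromov_product w y x"
  unfolding gromov_product_def by (simp add: dist_commute)

lemma gromov_product_self: "gromov_product w x x = dist w x"
  unfolding gromov_product_def by simp

lemma gromov_product_base_self: "gromov_product x x y = 0"
  unfolding gromov_product_def by simp

lemma gromov_product_swap_base: "gromov_product z y x = dist z x - gromov_product x y z"
  unfolding gromov_product_def by (simp add: dist_commute field_simps)

lemma gromov_product_base_change: "gromov_product w' x y - dist w w' \<le> gromov_product w x y"
  unfolding gromov_product_def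
  using dist_triangle[of w x w'] dist_triangle[of w' x w] dist_triangle[of w y w'] dist_triangle[of w' y w]
  by (simp add: dist_commute field_simps)

lemma gromov_product_point_change: "gromov_product w x' y - dist x x' \<le> gromov_product w x y"
  unfolding gromov_product_def
  using dist_triangle[of w x' x] dist_triangle[of x' y x] dist_triangle[of x y x']
  by (simp add: dist_commute field_simps)

lemma gromov_product_isometry:
  assumes "\<And>x y. dist (f x) (f y) = dist x y"
  shows "gromov_product (f w) (f x) (f y) = gromov_product w x y"
  unfolding gromov_product_def using assms by simp

definition delta_hyperbolic :: "real \<Rightarrow> 'a::metric_space itself \<Rightarrow> bool" where
  "delta_hyperbolic \<delta> _ \<longleftrightarrow> (\<forall>(w::'a) x y z.
     min (gromov_product w x y) (gromov_product w y z) - \<delta> \<le> gromov_product w x z)"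

lemma delta_hyperbolicD:
  assumes "delta_hyperbolic \<delta> TYPE('a::metric_space)"
    and "r \<le> gromov_product w x y" and "r \<le> gromov_product w y z"
  shows "r - \<delta> \<le> gromov_product (w::'a) x z"
  using assms unfolding delta_hyperbolic_def by (smt (verit))

lemma eventually_gromov_product_ge_tail:
  assumes hyp: "delta_hyperbolic \<delta> TYPE('a::metric_space)"
    and tail: "\<And>j. N \<le> j \<Longrightarrow> B \<le> gromov_product w (s m) (s j)"
    and "R + \<delta> + dist y (s m) \<le> B" and "R + \<delta> \<le> gromov_product w x y"
  shows "\<forall>\<^sub>F j in sequentially. R \<le> gromov_product (w::'a) x (s j)"
proof (rule eventually_sequentiallyI)
  fix j assume "N \<le> j"
  then have "R + \<delta> \<le> gromov_product w y (s j)"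
    using tail gromov_product_point_change[of w "s m" "s j" y] assms(3) by fastforce
  then show "R \<le> gromov_product w x (s j)"
    using delta_hyperbolicD[OF hyp assms(4)] by simp
qed

section \<open>Sequences converging at infinity\<close>

definition boundary_class :: "(nat \<Rightarrow> 'a::metric_space) \<Rightarrow> (nat \<Rightarrow> 'a) set" where
  "boundary_class s = {t. conv_at_infinity t \<and> equiv_at_infinity s t}"

lemma gromov_boundary_eq: "gromov_boundary = boundary_class ` {s. conv_at_infinity s}"
  unfolding gromov_boundary_def boundary_class_def by blast

lemma equiv_at_infinity_self_iff: "equiv_at_infinity s s \<longleftrightarrow> conv_at_infinity s"
  unfolding conv_at_infinity_def equiv_at_infinity_def ..

lemma equiv_at_infinity_sym: "equiv_at_infinity s t \<Longrightarrow> equiv_at_infinity t s"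
  unfolding equiv_at_infinity_def by (metis gromov_product_commute)

lemma equiv_at_infinity_trans:
  assumes hyp: "delta_hyperbolic \<delta> TYPE('a::metric_space)"
    and st: "equiv_at_infinity s t" and tu: "equiv_at_infinity t u"
  shows "equiv_at_infinity s (u :: nat \<Rightarrow> 'a)"
  unfolding equiv_at_infinity_def
proof (intro allI)
  fix w M
  obtain N1 where N1: "\<forall>n\<ge>N1. \<forall>m\<ge>N1. M + \<delta> \<le> gromov_product w (s n) (t m)"
    using st unfolding equiv_at_infinity_def by blast
  obtain N2 where N2: "\<forall>n\<ge>N2. \<forall>m\<ge>N2. M + \<delta> \<le> gromov_product w (t n) (u m)"
    using tu unfolding equiv_at_infinity_def by blast
  define k where "k = max N1 N2"
  have "M \<le> gromov_product w (s n) (u m)" if "k \<le> n" "k \<le> m" for n m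
    using delta_hyperbolicD[OF hyp, of "M + \<delta>" w "s n" "t k" "u m"] N1 N2 that
    unfolding k_def by simp
  then show "\<exists>N. \<forall>n\<ge>N. \<forall>m\<ge>N. M \<le> gromov_product w (s n) (u m)" by blast
qed

lemma not_equiv_at_infinity_frequently_bounded:
  assumes "\<not> equiv_at_infinity s t"
  shows "\<exists>C. \<forall>N. \<exists>n\<ge>N. \<exists>m\<ge>N. gromov_product x0 (s n) (t m) < C"
proof -
  obtain w M where "\<forall>N. \<exists>n\<ge>N. \<exists>m\<ge>N. gromov_product w (s n) (t m) < M"
    using assms unfolding equiv_at_infinity_def by (auto simp: not_le)
  then have "\<forall>N. \<exists>n\<ge>N. \<exists>m\<ge>N. gromov_product x0 (s n) (t m) < M + dist w x0"
    using gromov_product_base_change[of x0 _ _ w] by (smt (verit) dist_commute)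
  then show ?thesis by blast
qed

lemma boundary_class_eq:
  assumes hyp: "delta_hyperbolic \<delta> TYPE('a::metric_space)"
    and "equiv_at_infinity s (t :: nat \<Rightarrow> 'a)"
  shows "boundary_class s = boundary_class t"
proof -
  have sub: "boundary_class t' \<subseteq> boundary_class s'" if "equiv_at_infinity s' t'" for s' t' :: "nat \<Rightarrow> 'a"
    using equiv_at_infinity_trans[OF hyp that] unfolding boundary_class_def by blast
  show ?thesis
    using sub[OF equiv_at_infinity_sym[OF assms(2)]] sub[OF assms(2)] by (rule equalityI)
qed

lemma conv_at_infinity_isometry:
  assumes "\<And>x y. dist (f x) (f y) = dist x y" and "surj f" and "conv_at_infinity s"
  shows "conv_at_infinity (f \<circ> s)"
  unfolding conv_at_infinity_def
proof (intro allI)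
  fix w M
  obtain w' where "w = f w'" using \<open>surj f\<close> by (metis surj_def)
  then show "\<exists>N. \<forall>n\<ge>N. \<forall>m\<ge>N. M \<le> gromov_product w ((f \<circ> s) n) ((f \<circ> s) m)"
    using assms(3) gromov_product_isometry[OF assms(1)] unfolding conv_at_infinity_def by simp
qed

lemma equiv_at_infinity_isometry:
  assumes "\<And>x y. dist (f x) (f y) = dist x y" and "surj f" and "equiv_at_infinity s t"
  shows "equiv_at_infinity (f \<circ> s) (f \<circ> t)"
  unfolding equiv_at_infinity_def
proof (intro allI)
  fix w M
  obtain w' where "w = f w'" using \<open>surj f\<close> by (metis surj_def)
  then show "\<exists>N. \<forall>n\<ge>N. \<forall>m\<ge>N. M \<le> gromov_product w ((f \<circ> s) n) ((f \<circ> t) m)"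
    using assms(3) gromov_product_isometry[OF assms(1)] unfolding equiv_at_infinity_def by simp
qed

lemma boundary_class_isometry:
  assumes iso: "\<And>x y. dist (f x) (f y) = dist x y" and "bij f"
  shows "(\<lambda>t. f \<circ> t) ` boundary_class s = boundary_class (f \<circ> s)"
proof -
  define f' where "f' = inv_into UNIV f"
  have "surj f" "surj f'" "\<And>x. f (f' x) = x" "\<And>x. f' (f x) = x"
    using \<open>bij f\<close> unfolding f'_def
    by (simp_all add: bij_is_surj bij_imp_bij_inv bij_inv_eq_iff surj_f_inv_f bij_is_inj)
  then have iso': "dist (f' x) (f' y) = dist x y" for x y
    using iso[of "f' x" "f' y"] by simp
  have "u \<in> (\<lambda>t. f \<circ> t) ` boundary_class s" if u: "u \<in> boundary_class (f \<circ> s)" for u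
  proof
    have "f' \<circ> u \<in> boundary_class (f' \<circ> (f \<circ> s))"
      using u conv_at_infinity_isometry[OF iso' \<open>surj f'\<close>] equiv_at_infinity_isometry[OF iso' \<open>surj f'\<close>]
      unfolding boundary_class_def by blast
    moreover have "f' \<circ> (f \<circ> s) = s" by (simp add: comp_def \<open>\<And>x. f' (f x) = x\<close>)
    ultimately show "f' \<circ> u \<in> boundary_class s" by simp
    show "u = f \<circ> (f' \<circ> u)" by (simp add: comp_def \<open>\<And>x. f (f' x) = x\<close>)
  qed
  then show ?thesis
    using conv_at_infinity_isometry[OF iso \<open>surj f\<close>] equiv_at_infinity_isometry[OF iso \<open>surj f\<close>]
    unfolding boundary_class_def by blast
qed

lemma conv_at_infinity_approximating:
  assumes hyp: "delta_hyperbolic \<delta> TYPE('a::metric_space)"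
    and near: "\<And>k. \<forall>\<^sub>F j in sequentially. real k \<le> gromov_product x0 (t k) (s j)"
  shows "conv_at_infinity (t :: nat \<Rightarrow> 'a)"
  unfolding conv_at_infinity_def
proof (intro allI)
  fix w M
  define N where "N = nat \<lceil>M + dist w x0 + \<delta>\<rceil>"
  have "M \<le> gromov_product w (t n) (t m)" if "N \<le> n" "N \<le> m" for n m
  proof -
    obtain j where "real n \<le> gromov_product x0 (t n) (s j)" "real m \<le> gromov_product x0 (t m) (s j)"
      using eventually_happens'[OF _ eventually_conj[OF near[of n] near[of m]]] by auto
    then have "min (real n) (real m) - \<delta> \<le> gromov_product x0 (t n) (t m)"
      using delta_hyperbolicD[OF hyp, of "min (real n) (real m)" x0 "t n" "s j" "t m"]
      by (simp add: gromov_product_commute)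
    moreover have "M + dist w x0 + \<delta> \<le> min (real n) (real m)"
      using that unfolding N_def by linarith
    ultimately show ?thesis
      using gromov_product_base_change[of x0 "t n" "t m" w] by linarith
  qed
  then show "\<exists>N. \<forall>n\<ge>N. \<forall>m\<ge>N. M \<le> gromov_product w (t n) (t m)" by blast
qed

lemma equiv_at_infinity_approximating:
  assumes hyp: "delta_hyperbolic \<delta> TYPE('a::metric_space)"
    and conv: "conv_at_infinity s"
    and near: "\<And>k. \<forall>\<^sub>F j in sequentially. real k \<le> gromov_product x0 (t k) (s j)"
  shows "equiv_at_infinity s (t :: nat \<Rightarrow> 'a)"
  unfolding equiv_at_infinity_def
proof (intro allI)
  fix w M
  define r where "r = M + dist w x0 + \<delta>"
  obtain N1 where N1: "\<forall>n\<ge>N1. \<forall>m\<ge>N1. r \<le> gromov_product x0 (s n) (s m)"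
    using conv unfolding conv_at_infinity_def by blast
  define N where "N = max N1 (nat \<lceil>r\<rceil>)"
  have "M \<le> gromov_product w (s n) (t m)" if "N \<le> n" "N \<le> m" for n m
  proof -
    obtain j where "N1 \<le> j" "real m \<le> gromov_product x0 (t m) (s j)"
      using eventually_happens'[OF _ eventually_conj[OF eventually_ge_at_top near[of m]]] by auto
    moreover have "r \<le> real m" using that unfolding N_def by linarith
    ultimately have "r - \<delta> \<le> gromov_product x0 (s n) (t m)"
      using delta_hyperbolicD[OF hyp, of r x0 "s n" "s j" "t m"] N1 that
      unfolding N_def by (simp add: gromov_product_commute)
    then show ?thesis
      using gromov_product_base_change[of x0 "s n" "t m" w] unfolding r_def by linarith
  qed
  then show "\<exists>N. \<forall>n\<ge>N. \<forall>m\<ge>N. M \<le> gromov_product w (s n) (t m)" by blast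
qed

lemma gromov_boundary_conv_at_infinity:
  "\<xi> \<in> gromov_boundary \<Longrightarrow> s \<in> \<xi> \<Longrightarrow> conv_at_infinity s"
  unfolding gromov_boundary_eq boundary_class_def by blast

lemma limit_setE:
  assumes "\<xi> \<in> limit_set act H x0"
  obtains g where "\<xi> \<in> gromov_boundary" and "(\<lambda>n. act (g n) x0) \<in> \<xi>" and "\<And>n. g n \<in> H"
proof -
  obtain s where "\<xi> \<in> gromov_boundary" "s \<in> \<xi>" and "\<forall>n. \<exists>g. g \<in> H \<and> s n = act g x0"
    using assms unfolding limit_set_def by blast
  moreover from choice[OF this(3)] obtain g where "\<And>n. g n \<in> H" and "s = (\<lambda>n. act (g n) x0)"
    by fastforce
  ultimately show thesis using that by blast
qed

lemma limit_setI_approximating: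
  assumes hyp: "delta_hyperbolic \<delta> TYPE('a::metric_space)"
    and \<xi>: "\<xi> \<in> gromov_boundary" and "s \<in> \<xi>"
    and approx: "\<And>R. \<exists>p\<in>H. \<forall>\<^sub>F j in sequentially. R \<le> gromov_product x0 (act p x0) (s j)"
  shows "\<xi> \<in> limit_set act H (x0 :: 'a)"
proof -
  have "\<forall>k::nat. \<exists>p. p \<in> H \<and> (\<forall>\<^sub>F j in sequentially. real k \<le> gromov_product x0 (act p x0) (s j))"
    using approx by blast
  then obtain p where p: "\<And>k. p k \<in> H"
    and near: "\<And>k. \<forall>\<^sub>F j in sequentially. real k \<le> gromov_product x0 (act (p k) x0) (s j)"
    by (metis choice)
  define t where "t k = act (p k) x0" for k
  obtain s0 where \<xi>_eq: "\<xi> = boundary_class s0" using \<xi> unfolding gromov_boundary_eq by blast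
  then have "conv_at_infinity s" and "equiv_at_infinity s0 s"
    using \<open>s \<in> \<xi>\<close> unfolding boundary_class_def by auto
  moreover have "\<And>k. \<forall>\<^sub>F j in sequentially. real k \<le> gromov_product x0 (t k) (s j)"
    using near unfolding t_def .
  ultimately have "conv_at_infinity t" and "equiv_at_infinity s0 t"
    using conv_at_infinity_approximating[OF hyp] equiv_at_infinity_approximating[OF hyp]
      equiv_at_infinity_trans[OF hyp] by blast+
  then have "t \<in> \<xi>" unfolding \<xi>_eq boundary_class_def by blast
  moreover have "\<forall>n. t n \<in> (\<lambda>h. act h x0) ` H" using p unfolding t_def by blast
  ultimately show ?thesis
    using \<xi> unfolding limit_set_def by blast
qed

lemma positive_cone_witness:
  assumes cone: "positive_cone G P" and "group G" and a: "a \<in> carrier G"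
    and "Q a" and "Q (inv\<^bsub>G\<^esub> a)" and "\<not> Q \<one>\<^bsub>G\<^esub>"
  shows "\<exists>p\<in>P. Q p"
proof -
  have "P \<subseteq> carrier G" and "carrier G = P \<union> (\<lambda>g. inv\<^bsub>G\<^esub> g) ` P \<union> {\<one>\<^bsub>G\<^esub>}"
    using cone unfolding positive_cone_def by (blast, blast)
  moreover have "a \<noteq> \<one>\<^bsub>G\<^esub>" using \<open>Q a\<close> \<open>\<not> Q \<one>\<^bsub>G\<^esub>\<close> by metis
  ultimately consider "a \<in> P" | p where "p \<in> P" "p \<in> carrier G" "a = inv\<^bsub>G\<^esub> p"
    using a by auto
  then show ?thesis
  proof cases
    case 1
    then show ?thesis using \<open>Q a\<close> by blast
  next
    case (2 p)
    then have "inv\<^bsub>G\<^esub> a = p" by (simp add: group.inv_inv[OF \<open>group G\<close>])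
    then show ?thesis using \<open>p \<in> P\<close> \<open>Q (inv\<^bsub>G\<^esub> a)\<close> by blast
  qed
qed

section \<open>Isometric group actions\<close>

context
  fixes G :: "('g, 'b) monoid_scheme" and act :: "'g \<Rightarrow> 'a::metric_space \<Rightarrow> 'a"
  assumes ia: "isometric_action G act"
begin

lemma isometric_action_group_action: "group_action G UNIV act"
  using ia unfolding isometric_action_def by blast

lemma isometric_action_group: "group G"
  using group_action.group_hom[OF isometric_action_group_action] group_hom.axioms(1) by blast

lemma isometric_action_dist: "g \<in> carrier G \<Longrightarrow> dist (act g x) (act g y) = dist x y"
  using ia unfolding isometric_action_def by blast

lemma isometric_action_bij: "g \<in> carrier G \<Longrightarrow> bij (act g)"
  using group_action.bij_prop0[OF isometric_action_group_action] by (simp add: Bij_def)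

lemma isometric_action_one: "act \<one>\<^bsub>G\<^esub> x = x"
  using group_action.id_eq_one[OF isometric_action_group_action] by (metis restrict_apply' UNIV_I)

lemma isometric_action_mult:
  "g \<in> carrier G \<Longrightarrow> h \<in> carrier G \<Longrightarrow> act (g \<otimes>\<^bsub>G\<^esub> h) x = act g (act h x)"
  using group_action.composition_rule[OF isometric_action_group_action] by blast

lemma isometric_action_inv_cancel:
  assumes "g \<in> carrier G"
  shows "act g (act (inv\<^bsub>G\<^esub> g) x) = x"
  using isometric_action_mult[of g "inv\<^bsub>G\<^esub> g" x] assms
  by (simp add: group.inv_closed group.r_inv isometric_action_group isometric_action_one)

lemma gromov_product_act_mult_inv:
  assumes a: "a \<in> carrier G" and b: "b \<in> carrier G"
  shows "gromov_product x0 (act (a \<otimes>\<^bsub>G\<^esub> inv\<^bsub>G\<^esub> b) x0) (act a x0)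
    = dist x0 (act a x0) - gromov_product x0 (act (inv\<^bsub>G\<^esub> a) x0) (act (inv\<^bsub>G\<^esub> b) x0)"
proof -
  define u v where "u = act (inv\<^bsub>G\<^esub> a) x0" and "v = act (inv\<^bsub>G\<^esub> b) x0"
  have au: "act a u = x0" using isometric_action_inv_cancel[OF a] unfolding u_def .
  have av: "act a v = act (a \<otimes>\<^bsub>G\<^esub> inv\<^bsub>G\<^esub> b) x0"
    using isometric_action_mult[OF a group.inv_closed[OF isometric_action_group b]] unfolding v_def by simp
  have "gromov_product x0 (act (a \<otimes>\<^bsub>G\<^esub> inv\<^bsub>G\<^esub> b) x0) (act a x0)
      = gromov_product (act a u) (act a v) (act a x0)" by (simp add: au av)
  also have "\<dots> = gromov_product u v x0"
    using gromov_product_isometry isometric_action_dist[OF a] by blast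
  also have "\<dots> = dist u x0 - gromov_product x0 v u" by (rule gromov_product_swap_base)
  also have "dist u x0 = dist x0 (act a x0)" by (metis au isometric_action_dist[OF a])
  finally show ?thesis unfolding u_def v_def by (simp add: gromov_product_commute)
qed

lemma general_type_ex_translate_not_equiv:
  assumes hyp: "delta_hyperbolic \<delta> TYPE('a)" and gt: "general_type G act"
    and orbit: "\<And>n. z n \<in> (\<lambda>g. act g x0) ` carrier G"
  shows "\<exists>h\<in>carrier G. \<not> equiv_at_infinity z (act h \<circ> z)"
proof (cases "conv_at_infinity z")
  case False
  then have "\<not> equiv_at_infinity z (act \<one>\<^bsub>G\<^esub> \<circ> z)"
    by (simp add: comp_def isometric_action_one equiv_at_infinity_self_iff)
  then show ?thesis using monoid.one_closed[OF group.is_monoid[OF isometric_action_group]] by blast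
next
  case True
  define \<eta> where "\<eta> = boundary_class z"
  have "z \<in> \<eta>" using True unfolding \<eta>_def boundary_class_def by (simp add: equiv_at_infinity_self_iff)
  then have "\<eta> \<in> limit_set act (carrier G) x0"
    using True orbit unfolding limit_set_def gromov_boundary_eq \<eta>_def by blast
  then obtain h where h: "h \<in> carrier G" and moved: "boundary_act act h \<eta> \<noteq> \<eta>"
    using gt unfolding general_type_def by blast
  have "\<not> equiv_at_infinity z (act h \<circ> z)"
  proof
    assume "equiv_at_infinity z (act h \<circ> z)"
    then have "boundary_class (act h \<circ> z) = \<eta>"
      unfolding \<eta>_def by (rule boundary_class_eq[OF hyp, symmetric])
    then have "boundary_act act h \<eta> = \<eta>"
      unfolding boundary_act_def \<eta>_def
      using boundary_class_isometry[OF isometric_action_dist[OF h] isometric_action_bij[OF h]] by simp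
    with moved show False ..
  qed
  with h show ?thesis by blast
qed

lemma exists_element_and_inverse_near_limit:
  assumes hyp: "delta_hyperbolic \<delta> TYPE('a)"
    and g: "\<And>n. g n \<in> carrier G" and conv: "conv_at_infinity (\<lambda>n. act (g n) x0)"
    and h: "h \<in> carrier G"
    and not_equiv: "\<not> equiv_at_infinity (\<lambda>n. act (inv\<^bsub>G\<^esub> g n) x0) (act h \<circ> (\<lambda>n. act (inv\<^bsub>G\<^esub> g n) x0))"
  shows "\<exists>a\<in>carrier G. (\<forall>\<^sub>F j in sequentially. R \<le> gromov_product x0 (act a x0) (act (g j) x0))
    \<and> (\<forall>\<^sub>F j in sequentially. R \<le> gromov_product x0 (act (inv\<^bsub>G\<^esub> a) x0) (act (g j) x0))"
proof -
  interpret group G by (rule isometric_action_group)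
  define s z where "s n = act (g n) x0" and "z n = act (inv\<^bsub>G\<^esub> (g n)) x0" for n
  obtain C where freq: "\<forall>N. \<exists>n\<ge>N. \<exists>m\<ge>N. gromov_product x0 (z n) (act h (z m)) < C"
    using not_equiv_at_infinity_frequently_bounded[OF not_equiv, of x0] unfolding z_def by auto
  define D where "D = dist x0 (act (inv\<^bsub>G\<^esub> h) x0)"
  define B where "B = R + \<delta> + \<bar>C\<bar> + D"
  have "0 \<le> D" unfolding D_def by simp
  obtain N where N: "\<And>n m. N \<le> n \<Longrightarrow> N \<le> m \<Longrightarrow> B \<le> gromov_product x0 (s n) (s m)"
    using conv unfolding conv_at_infinity_def s_def by blast
  obtain n m where "N \<le> n" "N \<le> m" and bounded: "gromov_product x0 (z n) (act h (z m)) < \<bar>C\<bar>"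
    using freq by fastforce
  define v where "v = g m \<otimes>\<^bsub>G\<^esub> inv\<^bsub>G\<^esub> h"
  define a where "a = g n \<otimes>\<^bsub>G\<^esub> inv\<^bsub>G\<^esub> v"
  have v: "v \<in> carrier G" using g h unfolding v_def by simp
  have "inv\<^bsub>G\<^esub> v = h \<otimes>\<^bsub>G\<^esub> inv\<^bsub>G\<^esub> (g m)" using g h unfolding v_def by (simp add: inv_mult_group)
  then have inv_v: "act (inv\<^bsub>G\<^esub> v) x0 = act h (z m)"
    using g h unfolding z_def by (simp add: isometric_action_mult)
  have inv_a: "inv\<^bsub>G\<^esub> a = v \<otimes>\<^bsub>G\<^esub> inv\<^bsub>G\<^esub> (g n)" using g v unfolding a_def by (simp add: inv_mult_group)
  have "act v x0 = act (g m) (act (inv\<^bsub>G\<^esub> h) x0)" using g h unfolding v_def by (simp add: isometric_action_mult)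
  then have dist_v: "dist (act v x0) (s m) = D"
    using isometric_action_dist[OF g] unfolding s_def D_def by (simp add: dist_commute)
  have far: "B \<le> dist x0 (s k)" if "N \<le> k" for k
    using N[OF that that] by (simp add: gromov_product_self)
  have near_a: "R + \<delta> \<le> gromov_product x0 (act a x0) (s n)"
    using gromov_product_act_mult_inv[OF g[of n] v, of x0] far[OF \<open>N \<le> n\<close>] bounded
      \<open>0 \<le> D\<close> inv_v unfolding a_def s_def z_def B_def by simp
  have near_inv_a: "R + \<delta> \<le> gromov_product x0 (act (inv\<^bsub>G\<^esub> a) x0) (act v x0)"
    using gromov_product_act_mult_inv[OF v g[of n], of x0] far[OF \<open>N \<le> m\<close>] bounded dist_v
      dist_triangle[of x0 "s m" "act v x0"] inv_v inv_a gromov_product_commute[of x0 "z n"]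
    unfolding s_def B_def by (simp add: dist_commute z_def)
  have "a \<in> carrier G" using g v unfolding a_def by simp
  moreover have "\<forall>\<^sub>F j in sequentially. R \<le> gromov_product x0 (act a x0) (s j)"
    using eventually_gromov_product_ge_tail[where s = s and m = n, OF hyp N[OF \<open>N \<le> n\<close>] _ near_a] \<open>0 \<le> D\<close>
    unfolding B_def by simp
  moreover have "\<forall>\<^sub>F j in sequentially. R \<le> gromov_product x0 (act (inv\<^bsub>G\<^esub> a) x0) (s j)"
    using eventually_gromov_product_ge_tail[where s = s and m = m, OF hyp N[OF \<open>N \<le> m\<close>] _ near_inv_a] dist_v
    unfolding B_def by simp
  ultimately show ?thesis unfolding s_def by blast
qed

lemma exists_positive_near_limit:
  assumes hyp: "delta_hyperbolic \<delta> TYPE('a)" and cone: "positive_cone G P"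
    and g: "\<And>n. g n \<in> carrier G" and conv: "conv_at_infinity (\<lambda>n. act (g n) x0)"
    and h: "h \<in> carrier G"
    and not_equiv: "\<not> equiv_at_infinity (\<lambda>n. act (inv\<^bsub>G\<^esub> g n) x0) (act h \<circ> (\<lambda>n. act (inv\<^bsub>G\<^esub> g n) x0))"
  shows "\<exists>p\<in>P. \<forall>\<^sub>F j in sequentially. R \<le> gromov_product x0 (act p x0) (act (g j) x0)"
proof -
  let ?near = "\<lambda>p. \<forall>\<^sub>F j in sequentially. max R 1 \<le> gromov_product x0 (act p x0) (act (g j) x0)"
  obtain a where "a \<in> carrier G" "?near a" "?near (inv\<^bsub>G\<^esub> a)"
    using exists_element_and_inverse_near_limit[OF hyp g conv h not_equiv, where R = "max R 1"] by blast
  moreover have "\<not> ?near \<one>\<^bsub>G\<^esub>"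
    by (simp add: isometric_action_one gromov_product_base_self)
  ultimately obtain p where "p \<in> P" "?near p"
    using positive_cone_witness[OF cone isometric_action_group, of a ?near] by blast
  then show ?thesis by (auto elim: eventually_mono)
qed

end

theorem theorem1p1:
  fixes G :: "('g, 'b) monoid_scheme"
    and act :: "'g \<Rightarrow> 'a::metric_space \<Rightarrow> 'a"
    and P :: "'g set"
  assumes "gromov_hyperbolic_space TYPE('a)"
    and "group G"
    and "isometric_action G act"
    and "general_type G act"
    and "positive_cone G P"
  shows "\<forall>x0. limit_set act (carrier G) x0 \<subseteq> limit_set act P x0"
proof (intro allI subsetI)
  fix x0 \<xi> assume "\<xi> \<in> limit_set act (carrier G) x0"
  then obtain g where \<xi>: "\<xi> \<in> gromov_boundary" and s: "(\<lambda>n. act (g n) x0) \<in> \<xi>"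
    and g: "\<And>n. g n \<in> carrier G"
    by (rule limit_setE) (rule that)
  obtain \<delta> where hyp: "delta_hyperbolic \<delta> TYPE('a)"
    using assms(1) unfolding gromov_hyperbolic_space_def delta_hyperbolic_def by auto
  have "act (inv\<^bsub>G\<^esub> g n) x0 \<in> (\<lambda>g. act g x0) ` carrier G" for n
    using group.inv_closed[OF assms(2) g] by (rule imageI)
  then have "\<exists>h\<in>carrier G. \<not> equiv_at_infinity (\<lambda>n. act (inv\<^bsub>G\<^esub> g n) x0)
      (act h \<circ> (\<lambda>n. act (inv\<^bsub>G\<^esub> g n) x0))"
    by (rule general_type_ex_translate_not_equiv[OF assms(3) hyp assms(4)])
  then obtain h where "h \<in> carrier G"
    and "\<not> equiv_at_infinity (\<lambda>n. act (inv\<^bsub>G\<^esub> g n) x0) (act h \<circ> (\<lambda>n. act (inv\<^bsub>G\<^esub> g n) x0))"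
    by blast
  from exists_positive_near_limit[OF assms(3) hyp assms(5) g gromov_boundary_conv_at_infinity[OF \<xi> s] this]
  show "\<xi> \<in> limit_set act P x0"
    by (rule limit_setI_approximating[OF hyp \<xi> s])
qed

end
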